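(* Let $\mathbf{w_0}=(s_1s_2\cdots s_{n-1})(s_1s_2\cdots s_{n-2})\cdots(s_1s_2)(s_1)$, viewed as a sequence of $n-1$ runs (the $k$-th run being $s_1s_2\cdots s_{n-k}$). Let $\mathbf{w}$ be the positive distinguished subexpression in $\mathbf{w_0}$ for some $w\in S_n$. If, for some $k\ge 2$, $\mathbf{w}$ uses the transposition $s_i$ from the $k$-th run of $\mathbf{w_0}$, then $\mathbf{w}$ also uses the transposition $s_{i+1}$ from the $(k-1)$-st run of $\mathbf{w_0}$.
   Context: $s_i=(i,\,i+1)\in S_n$ are simple transpositions; $\ell(u)$ is the length of $u$ (minimal number of simple transpositions in an expression for $u$); an expression is reduced if it uses $\ell(u)$ transpositions. $v\le w$ in Bruhat order if some reduced expression for $w$ contains a reduced subexpression for $v$. Given a reduced expression $\mathbf{w}=s_{i_1}\cdots s_{i_k}$ for $w$ and $v\le w$, a reduced subexpression $\mathbf{v}=s_{i_{j_1}}\cdots s_{i_{j_m}}$ ($1\le j_1<\dots<j_m\le k$) for $v$ is positive distinguished if, for every $1\le r\le m+1$ and every $p$ with $j_{r-1}\le p<j_r$ (with conventions $j_0=0$, $j_{m+1}=k+1$) such that $\ell(s_{i_p}s_{i_{j_r}}\cdots s_{i_{j_m}})<\ell(s_{i_{j_r}}\cdots s_{i_{j_m}})$, one has $p=j_{r-1}$. For every $v\le w$ and reduced expression of $w$ there is a unique positive distinguished subexpression for $v$ (informally, the leftmost reduced subexpression). *)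

theory Defs
  imports "HOL-Combinatorics.Combinatorics"
begin

text \<open>Permutations of {1..n} are functions nat => nat (permuting {1..n});
  products are function composition, u v = u o v.
  A word is a list of indices [i_1,...,i_k] standing for s_{i_1} ... s_{i_k}.\<close>

definition stransp :: "nat \<Rightarrow> nat \<Rightarrow> nat" where
  "stransp i = transpose i (Suc i)"

definition word_eval :: "nat list \<Rightarrow> nat \<Rightarrow> nat" where
  "word_eval ws = foldr (\<lambda>i f. stransp i \<circ> f) ws id"

definition perm_length :: "nat \<Rightarrow> (nat \<Rightarrow> nat) \<Rightarrow> nat" where
  "perm_length n u = (LEAST k. \<exists>ws. length ws = k \<and> set ws \<subseteq> {1..<n} \<and> word_eval ws = u)"

text \<open>Positive distinguished subexpression. The ambient reduced word is ws
  (positions 1..k, ws!(p-1) is i_p); the subexpression is given by the strictly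
  increasing list js = [j_1,...,j_m] of positions.\<close>
definition sub_word :: "nat list \<Rightarrow> nat list \<Rightarrow> nat list" where
  "sub_word ws js = map (\<lambda>j. ws ! (j - 1)) js"

definition is_pos_dist_subexpr :: "nat \<Rightarrow> nat list \<Rightarrow> (nat \<Rightarrow> nat) \<Rightarrow> nat list \<Rightarrow> bool" where
  "is_pos_dist_subexpr n ws v js \<longleftrightarrow>
     (let k = length ws; m = length js;
          jj = (\<lambda>r. if r = 0 then 0 else if r = m + 1 then k + 1 else js ! (r - 1));
          suf = (\<lambda>r. word_eval (sub_word ws (drop (r - 1) js)))
      in sorted_wrt (<) js \<and> set js \<subseteq> {1..k}
         \<and> word_eval (sub_word ws js) = v \<and> m = perm_length n v
         \<and> (\<forall>r\<in>{1..m+1}. \<forall>p. jj (r - 1) \<le> p \<and> p < jj r \<and>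
              perm_length n (stransp (ws ! (p - 1)) \<circ> suf r) < perm_length n (suf r)
              \<longrightarrow> p = jj (r - 1)))"

definition w0_word :: "nat \<Rightarrow> nat list" where
  "w0_word n = concat (map (\<lambda>k. [1..<n - k + 1]) [1..<n])"

text \<open>1-based position in w0_word n of the letter s_i of the k-th run.\<close>
definition run_pos :: "nat \<Rightarrow> nat \<Rightarrow> nat \<Rightarrow> nat" where
  "run_pos n k i = (\<Sum>l=1..<k. n - l) + i"

end

theory Submission
  imports Defs
begin

(*
  Let r_p be the inverse of the product of the letters of the subexpression at positions
  >= p, viewed as the one-line word r_p(1) ... r_p(n). The suffixes of the subexpression are
  reduced, so a used letter s_j is a left descent of the suffix it starts, and by the
  distinguished condition an unused letter is not a left descent of the remaining suffix.
  In terms of r_p: the letter s_j at position p is used iff r_p(j+1) < r_p(j), and then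
  r_(p+1) = r_p o s_j, otherwise r_(p+1) = r_p. So reading w0 from left to right runs bubble
  sort on the one-line word of w^-1, each run being one pass. No later letter touches positions i and i+1 before s_i of
  run k, so there r(i) <= r(i+1) and s_i cannot be used.
*)

section \<open>Coxeter length as the number of inversions\<close>

lemma stransp_permutes: "1 \<le> j \<Longrightarrow> j < n \<Longrightarrow> stransp j permutes {1..n}"
  unfolding stransp_def by (rule permutes_swap_id) auto

lemma stransp_comp_stransp [simp]: "stransp j \<circ> stransp j = id"
  by (simp add: fun_eq_iff stransp_def)

lemma inv_stransp_comp: "bij u \<Longrightarrow> inv (stransp j \<circ> u) = inv u \<circ> stransp j"
  by (simp add: o_inv_distrib stransp_def)

lemma stransp_less_stransp_iff:
  assumes "{x, y} \<noteq> {j, Suc j}"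
  shows "stransp j x < stransp j y \<longleftrightarrow> x < y"
  using assms unfolding stransp_def transpose_def by auto

lemma word_eval_Nil [simp]: "word_eval [] = id"
  by (simp add: word_eval_def)

lemma word_eval_Cons [simp]: "word_eval (j # ws) = stransp j \<circ> word_eval ws"
  by (simp add: word_eval_def)

lemma word_eval_append: "word_eval (xs @ ys) = word_eval xs \<circ> word_eval ys"
  by (induction xs) (auto simp: o_assoc)

lemma word_eval_permutes: "set ws \<subseteq> {1..<n} \<Longrightarrow> word_eval ws permutes {1..n}"
proof (induction ws)
  case (Cons j ws)
  then have "word_eval ws permutes {1..n}" "1 \<le> j" "j < n"
    by auto
  then show ?case
    unfolding word_eval_Cons by (blast intro: permutes_compose stransp_permutes)
qed (simp add: permutes_id)

definition inversions :: "nat \<Rightarrow> (nat \<Rightarrow> nat) \<Rightarrow> (nat \<times> nat) set" where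
  "inversions n u = {(a, b). a \<in> {1..n} \<and> b \<in> {1..n} \<and> a < b \<and> u b < u a}"

lemma finite_inversions [simp]: "finite (inversions n u)"
  by (rule finite_subset[of _ "{1..n} \<times> {1..n}"]) (auto simp: inversions_def)

lemma inversions_id [simp]: "inversions n id = {}"
  by (auto simp: inversions_def)

lemma inversions_stransp_descent:
  assumes u: "u permutes {1..n}" and j: "1 \<le> j" "j < n" and d: "inv u (Suc j) < inv u j"
  shows "inversions n u = insert (inv u (Suc j), inv u j) (inversions n (stransp j \<circ> u))"
    and "(inv u (Suc j), inv u j) \<notin> inversions n (stransp j \<circ> u)"
proof -
  define a0 b0 where "a0 = inv u j" and "b0 = inv u (Suc j)"
  have u_inv: "u a0 = j" "u b0 = Suc j"
    using permutes_inverses(1)[OF u] by (auto simp: a0_def b0_def)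
  have in_range: "a0 \<in> {1..n}" "b0 \<in> {1..n}"
    using permutes_in_image[OF permutes_inv[OF u]] j by (auto simp: a0_def b0_def)
  have "stransp j (u b) < stransp j (u a) \<longleftrightarrow> u b < u a"
    if "a < b" "(a, b) \<noteq> (b0, a0)" for a b
  proof (rule stransp_less_stransp_iff)
    show "{u b, u a} \<noteq> {j, Suc j}"
    proof
      assume "{u b, u a} = {j, Suc j}"
      then have "u b = j \<and> u a = Suc j \<or> u b = Suc j \<and> u a = j"
        by (auto simp: doubleton_eq_iff)
      then show False
        using that d permutes_inverses(2)[OF u, of a] permutes_inverses(2)[OF u, of b]
        by (auto simp: a0_def b0_def)
    qed
  qed
  then have same: "x \<in> inversions n u \<longleftrightarrow> x \<in> inversions n (stransp j \<circ> u)"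
    if "x \<noteq> (b0, a0)" for x
    using that by (cases x) (auto simp: inversions_def)
  have old: "(b0, a0) \<in> inversions n u"
    using u_inv in_range d by (simp add: inversions_def a0_def b0_def)
  have new: "(b0, a0) \<notin> inversions n (stransp j \<circ> u)"
    using u_inv by (simp add: inversions_def stransp_def)
  have "inversions n u = insert (b0, a0) (inversions n (stransp j \<circ> u))"
  proof (rule set_eqI)
    show "x \<in> inversions n u \<longleftrightarrow> x \<in> insert (b0, a0) (inversions n (stransp j \<circ> u))" for x
      using same[of x] old by (cases "x = (b0, a0)") simp_all
  qed
  with new show "inversions n u = insert (inv u (Suc j), inv u j) (inversions n (stransp j \<circ> u))"
    and "(inv u (Suc j), inv u j) \<notin> inversions n (stransp j \<circ> u)"
    by (simp_all add: a0_def b0_def)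
qed

lemma card_inversions_stransp_descent:
  assumes "u permutes {1..n}" "1 \<le> j" "j < n" "inv u (Suc j) < inv u j"
  shows "card (inversions n u) = Suc (card (inversions n (stransp j \<circ> u)))"
  using inversions_stransp_descent[OF assms] by simp

lemma card_inversions_stransp_ascent:
  assumes u: "u permutes {1..n}" and j: "1 \<le> j" "j < n" and a: "\<not> inv u (Suc j) < inv u j"
  shows "card (inversions n (stransp j \<circ> u)) = Suc (card (inversions n u))"
proof -
  have su: "stransp j \<circ> u permutes {1..n}"
    using permutes_compose[OF u stransp_permutes[OF j]] .
  have "inv u (Suc j) \<noteq> inv u j"
    using permutes_inj[OF permutes_inv[OF u]] by (auto dest: injD)
  moreover have "inv (stransp j \<circ> u) = inv u \<circ> stransp j"
    using inv_stransp_comp[OF permutes_bij[OF u]] .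
  ultimately have "inv (stransp j \<circ> u) (Suc j) < inv (stransp j \<circ> u) j"
    using a by (simp add: stransp_def)
  from card_inversions_stransp_descent[OF su j this] show ?thesis
    by (simp add: o_assoc)
qed

lemma permutes_descentE:
  assumes u: "u permutes {1..n}" and "u \<noteq> id"
  obtains j where "1 \<le> j" "j < n" "inv u (Suc j) < inv u j"
proof (cases "\<exists>j. 1 \<le> j \<and> j < n \<and> inv u (Suc j) < inv u j")
  case True
  with that show ?thesis
    by blast
next
  case False
  then have mono: "inv u j \<le> inv u (Suc j)" if "1 \<le> j" "j < n" for j
    using that by (meson not_less)
  have iu: "inv u permutes {1..n}"
    using permutes_inv[OF u] .
  have "i \<le> inv u i" if "i \<in> {1..n}" for i
    using that
  proof (induction i)
    case (Suc i)
    show ?case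
    proof (cases "i = 0")
      case True
      then show ?thesis
        using permutes_in_image[OF iu, of "Suc i"] Suc.prems by auto
    next
      case False
      then have "i \<le> inv u i" "inv u i \<le> inv u (Suc i)"
        using Suc mono[of i] by auto
      moreover have "inv u i \<noteq> inv u (Suc i)"
        using permutes_inj[OF iu] by (auto dest: injD)
      ultimately show ?thesis
        by simp
    qed
  qed simp
  then have "inv u = id"
    using permutes_natset_ge[OF iu] by auto
  then show ?thesis
    using \<open>u \<noteq> id\<close> by (metis inv_id inv_inv_eq permutes_bij u)
qed

lemma card_inversions_word_exists:
  "u permutes {1..n} \<Longrightarrow>
    \<exists>ws. length ws = card (inversions n u) \<and> set ws \<subseteq> {1..<n} \<and> word_eval ws = u"
proof (induction "card (inversions n u)" arbitrary: u)
  case 0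
  have "u = id"
  proof (rule ccontr)
    assume "u \<noteq> id"
    with "0.prems" obtain j where "1 \<le> j" "j < n" "inv u (Suc j) < inv u j"
      by (rule permutes_descentE)
    with card_inversions_stransp_descent[OF "0.prems"] "0.hyps" show False
      by simp
  qed
  then show ?case
    using "0.hyps" by (intro exI[of _ "[]"]) simp
next
  case (Suc N)
  have "u \<noteq> id"
    using Suc.hyps(2) inversions_id by force
  with Suc.prems obtain j where j: "1 \<le> j" "j < n" "inv u (Suc j) < inv u j"
    by (rule permutes_descentE)
  have card: "card (inversions n u) = Suc (card (inversions n (stransp j \<circ> u)))"
    using card_inversions_stransp_descent[OF Suc.prems j] .
  obtain ws where ws: "length ws = card (inversions n (stransp j \<circ> u))" "set ws \<subseteq> {1..<n}"
    "word_eval ws = stransp j \<circ> u"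
    using Suc.hyps(1)[of "stransp j \<circ> u"] Suc.hyps(2) card
      permutes_compose[OF Suc.prems stransp_permutes[OF j(1,2)]] by auto
  show ?case
    using ws j card by (intro exI[of _ "j # ws"]) (auto simp: comp_assoc[symmetric])
qed

lemma perm_length_eq_card_inversions:
  assumes "u permutes {1..n}"
  shows "perm_length n u = card (inversions n u)"
  unfolding perm_length_def
proof (rule Least_equality)
  show "\<exists>ws. length ws = card (inversions n u) \<and> set ws \<subseteq> {1..<n} \<and> word_eval ws = u"
    using card_inversions_word_exists[OF assms] .
next
  have "card (inversions n (word_eval ws)) \<le> length ws" if "set ws \<subseteq> {1..<n}" for ws
    using that
  proof (induction ws)
    case (Cons j ws)
    then have u: "word_eval ws permutes {1..n}" and j: "1 \<le> j" "j < n"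
      and IH: "card (inversions n (word_eval ws)) \<le> length ws"
      using word_eval_permutes by auto
    have "card (inversions n (stransp j \<circ> word_eval ws)) \<le> Suc (length ws)"
      using card_inversions_stransp_descent[OF u j] card_inversions_stransp_ascent[OF u j] IH
      by (cases "inv (word_eval ws) (Suc j) < inv (word_eval ws) j") simp_all
    then show ?case
      by (simp only: word_eval_Cons length_Cons)
  qed simp
  then show "card (inversions n u) \<le> k"
    if "\<exists>ws. length ws = k \<and> set ws \<subseteq> {1..<n} \<and> word_eval ws = u" for k
    using that by blast
qed

lemma perm_length_word_eval_le: "set ws \<subseteq> {1..<n} \<Longrightarrow> perm_length n (word_eval ws) \<le> length ws"
  unfolding perm_length_def by (rule Least_le) blast

lemma reduced_wordE:
  assumes "u permutes {1..n}"
  obtains ws where "length ws = perm_length n u" "set ws \<subseteq> {1..<n}" "word_eval ws = u"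
  using card_inversions_word_exists[OF assms] perm_length_eq_card_inversions[OF assms] by auto

lemma perm_length_stransp_less_iff:
  assumes u: "u permutes {1..n}" and j: "1 \<le> j" "j < n"
  shows "perm_length n (stransp j \<circ> u) < perm_length n u \<longleftrightarrow> inv u (Suc j) < inv u j"
  using perm_length_eq_card_inversions[OF u]
    perm_length_eq_card_inversions[OF permutes_compose[OF u stransp_permutes[OF j]]]
    card_inversions_stransp_descent[OF u j] card_inversions_stransp_ascent[OF u j]
  by (cases "inv u (Suc j) < inv u j") auto

section \<open>Bubble sort steps\<close>

definition sort_step :: "nat \<Rightarrow> (nat \<Rightarrow> nat) \<Rightarrow> nat \<Rightarrow> nat" where
  "sort_step j r = (if r (Suc j) < r j then r \<circ> stransp j else r)"

definition prefix_max :: "(nat \<Rightarrow> nat) \<Rightarrow> nat \<Rightarrow> bool" where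
  "prefix_max r c \<longleftrightarrow> (\<forall>a. 1 \<le> a \<and> a < c \<longrightarrow> r a \<le> r c)"

lemma prefix_max_le_1: "c \<le> 1 \<Longrightarrow> prefix_max r c"
  by (simp add: prefix_max_def)

lemma prefix_max_sort_step:
  assumes "prefix_max r c" "1 \<le> j" "j \<noteq> c" "Suc j \<noteq> c"
  shows "prefix_max (sort_step j r) c"
proof -
  have "1 \<le> stransp j a \<and> stransp j a < c" if "1 \<le> a" "a < c" for a
    using that assms(2-4) by (auto simp: stransp_def transpose_def)
  moreover have "stransp j c = c"
    using assms(3,4) by (simp add: stransp_def)
  ultimately show ?thesis
    using assms(1) by (auto simp: prefix_max_def sort_step_def)
qed

lemma prefix_max_sort_step_Suc:
  assumes "prefix_max r c"
  shows "prefix_max (sort_step c r) (Suc c)"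
  using assms by (auto simp: prefix_max_def sort_step_def stransp_def less_Suc_eq)

lemma prefix_max_bubble_pass:
  assumes "\<And>t. 1 \<le> t \<Longrightarrow> t < c \<Longrightarrow> r (Suc (P + t)) = sort_step t (r (P + t))"
  shows "prefix_max (r (P + c)) c"
  using assms
proof (induction c)
  case (Suc c)
  show ?case
  proof (cases "c = 0")
    case False
    then show ?thesis
      using Suc prefix_max_sort_step_Suc[of "r (P + c)" c] by simp
  qed (simp add: prefix_max_le_1)
qed (simp add: prefix_max_le_1)

lemma prefix_max_sort_steps:
  assumes "prefix_max (r P) c" "P \<le> Q"
    and "\<And>p. P \<le> p \<Longrightarrow> p < Q \<Longrightarrow> r (Suc p) = sort_step (l p) (r p)"
    and "\<And>p. P \<le> p \<Longrightarrow> p < Q \<Longrightarrow> 1 \<le> l p \<and> l p \<noteq> c \<and> Suc (l p) \<noteq> c"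
  shows "prefix_max (r Q) c"
  using assms(2,1,3,4)
  by (induction rule: dec_induct) (simp_all add: prefix_max_sort_step)

section \<open>Suffixes of a positive distinguished subexpression\<close>

lemma sub_word_append: "sub_word ws (xs @ ys) = sub_word ws xs @ sub_word ws ys"
  by (simp add: sub_word_def)

lemma sub_word_Cons [simp]: "sub_word ws (p # js) = ws ! (p - 1) # sub_word ws js"
  by (simp add: sub_word_def)

lemma length_sub_word [simp]: "length (sub_word ws js) = length js"
  by (simp add: sub_word_def)

lemma set_sub_word_subset: "set js \<subseteq> {1..length ws} \<Longrightarrow> set (sub_word ws js) \<subseteq> set ws"
  by (force simp: sub_word_def)

lemma sorted_dropWhile_less:
  assumes "sorted_wrt (<) js"
  shows "dropWhile (\<lambda>j. j < p) js =
    (if p \<in> set js then p # dropWhile (\<lambda>j. j < Suc p) js else dropWhile (\<lambda>j. j < Suc p) js)"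
  using assms
proof (induction js)
  case (Cons a js)
  have "dropWhile (\<lambda>j. j < Suc p) js = js" if "p = a"
    using Cons.prems that by (cases js) auto
  with Cons show ?case
    by auto
qed simp

definition subexpr_suffix :: "nat list \<Rightarrow> nat list \<Rightarrow> nat \<Rightarrow> nat \<Rightarrow> nat" where
  "subexpr_suffix ws js p = word_eval (sub_word ws (dropWhile (\<lambda>j. j < p) js))"

lemma is_pos_dist_subexprD:
  assumes "is_pos_dist_subexpr n ws v js"
  shows "sorted_wrt (<) js" "set js \<subseteq> {1..length ws}" "word_eval (sub_word ws js) = v"
    and "length js = perm_length n v"
  using assms unfolding is_pos_dist_subexpr_def Let_def by blast+

(* r is the number of used positions before p; in the notation of the paper
   p lies strictly between j_r and j_(r+1). *)
lemma is_pos_dist_subexpr_skipD: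
  assumes "is_pos_dist_subexpr n ws v js" "r \<le> length js"
    and "(if r = 0 then 0 else js ! (r - 1)) < p"
    and "p < (if r = length js then length ws + 1 else js ! r)"
  shows "\<not> perm_length n (stransp (ws ! (p - 1)) \<circ> word_eval (sub_word ws (drop r js)))
    < perm_length n (word_eval (sub_word ws (drop r js)))"
proof
  assume descent: "perm_length n (stransp (ws ! (p - 1)) \<circ> word_eval (sub_word ws (drop r js)))
    < perm_length n (word_eval (sub_word ws (drop r js)))"
  have "Suc r \<in> {1..length js + 1}"
    using assms(2) by simp
  from assms(1)[unfolded is_pos_dist_subexpr_def Let_def, THEN conjunct2, THEN conjunct2,
      THEN conjunct2, THEN conjunct2, rule_format, OF this, of p]
  show False
    using assms(2-4) descent by (simp split: if_splits)
qed

lemma subexpr_suffix_permutes: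
  assumes "is_pos_dist_subexpr n ws v js" "set ws \<subseteq> {1..<n}"
  shows "subexpr_suffix ws js p permutes {1..n}"
proof -
  have "set (dropWhile (\<lambda>j. j < p) js) \<subseteq> {1..length ws}"
    using is_pos_dist_subexprD(2)[OF assms(1)] by (auto dest: set_dropWhileD)
  then show ?thesis
    unfolding subexpr_suffix_def using assms(2)
    by (intro word_eval_permutes) (meson order_trans set_sub_word_subset)
qed

lemma perm_length_subexpr_suffix:
  assumes pds: "is_pos_dist_subexpr n ws v js" and letters: "set ws \<subseteq> {1..<n}"
  shows "perm_length n (subexpr_suffix ws js p) = length (dropWhile (\<lambda>j. j < p) js)"
proof -
  define A B where "A = takeWhile (\<lambda>j. j < p) js" and "B = dropWhile (\<lambda>j. j < p) js"
  have js: "A @ B = js"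
    by (simp add: A_def B_def)
  have "set A \<subseteq> set js" "set B \<subseteq> set js"
    by (auto simp: A_def B_def dest: set_takeWhileD set_dropWhileD)
  then have sub: "set (sub_word ws A) \<subseteq> {1..<n}" "set (sub_word ws B) \<subseteq> {1..<n}"
    using set_sub_word_subset is_pos_dist_subexprD(2)[OF pds] letters by (meson order_trans)+
  have le: "perm_length n (subexpr_suffix ws js p) \<le> length B"
    using perm_length_word_eval_le[OF sub(2)] by (simp add: subexpr_suffix_def B_def)
  obtain us where us: "length us = perm_length n (subexpr_suffix ws js p)" "set us \<subseteq> {1..<n}"
    "word_eval us = subexpr_suffix ws js p"
    using reduced_wordE[OF subexpr_suffix_permutes[OF pds letters]] .
  have "word_eval (sub_word ws (A @ B)) = v"
    using is_pos_dist_subexprD(3)[OF pds] js by simp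
  then have "word_eval (sub_word ws A @ us) = v"
    using us(3) by (simp add: word_eval_append sub_word_append subexpr_suffix_def B_def)
  then have "perm_length n v \<le> length (sub_word ws A @ us)"
    using perm_length_word_eval_le[of "sub_word ws A @ us" n]
      sub(1) us(2) by simp
  then have "length B \<le> length us"
    using is_pos_dist_subexprD(4)[OF pds] js[symmetric] by simp
  with le us(1) show ?thesis
    unfolding B_def[symmetric] by linarith
qed

lemma subexpr_suffix_skipped_not_descent:
  assumes pds: "is_pos_dist_subexpr n ws v js"
    and p: "p \<in> {1..length ws}" "p \<notin> set js"
  shows "\<not> perm_length n (stransp (ws ! (p - 1)) \<circ> subexpr_suffix ws js p)
    < perm_length n (subexpr_suffix ws js p)"
proof -
  define A B where "A = takeWhile (\<lambda>j. j < p) js" and "B = dropWhile (\<lambda>j. j < p) js"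
  have js: "js = A @ B"
    by (simp add: A_def B_def)
  have before: "(if length A = 0 then 0 else js ! (length A - 1)) < p"
  proof (cases "A = []")
    case False
    then have "js ! (length A - 1) = last A"
      using js by (simp add: nth_append last_conv_nth)
    moreover have "last A < p"
      using set_takeWhileD[of "last A" "\<lambda>j. j < p" js] last_in_set[OF False]
      unfolding A_def by blast
    ultimately show ?thesis
      using False by simp
  qed (use p in simp)
  have after: "p < (if length A = length js then length ws + 1 else js ! length A)"
  proof (cases "B = []")
    case False
    then have "length A \<noteq> length js" "js ! length A = hd B" "hd B \<in> set js"
      using js by (simp_all add: nth_append hd_conv_nth)
    moreover have "\<not> hd B < p"
      using hd_dropWhile[of "\<lambda>j. j < p" js] False unfolding B_def by blast
    ultimately show ?thesis
      using p(2) by (cases "hd B = p") auto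
  qed (use p js in simp)
  have "word_eval (sub_word ws (drop (length A) js)) = subexpr_suffix ws js p"
    by (simp add: subexpr_suffix_def A_def dropWhile_eq_drop)
  with is_pos_dist_subexpr_skipD[OF pds _ before after] js show ?thesis
    by simp
qed

lemma subexpr_suffix_mem:
  assumes "sorted_wrt (<) js" "p \<in> set js"
  shows "subexpr_suffix ws js p = stransp (ws ! (p - 1)) \<circ> subexpr_suffix ws js (Suc p)"
  using assms unfolding subexpr_suffix_def by (subst sorted_dropWhile_less) simp_all

lemma subexpr_suffix_Suc_not_mem:
  assumes "sorted_wrt (<) js" "p \<notin> set js"
  shows "subexpr_suffix ws js (Suc p) = subexpr_suffix ws js p"
  using assms unfolding subexpr_suffix_def by (subst (2) sorted_dropWhile_less) simp_all

lemma subexpr_suffix_mem_iff_descent: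
  assumes pds: "is_pos_dist_subexpr n ws v js" and letters: "set ws \<subseteq> {1..<n}"
    and p: "p \<in> {1..length ws}"
  defines "j \<equiv> ws ! (p - 1)" and "u \<equiv> subexpr_suffix ws js p"
  shows "p \<in> set js \<longleftrightarrow> inv u (Suc j) < inv u j"
proof -
  have "p - 1 < length ws"
    using p by auto
  then have "j \<in> set ws"
    unfolding j_def by (rule nth_mem)
  then have j: "1 \<le> j" "j < n"
    using letters by auto
  have "p \<in> set js \<longleftrightarrow> perm_length n (stransp j \<circ> u) < perm_length n u"
  proof (cases "p \<in> set js")
    case True
    then have "stransp j \<circ> u = subexpr_suffix ws js (Suc p)"
      using subexpr_suffix_mem[OF is_pos_dist_subexprD(1)[OF pds]]
      by (simp add: u_def j_def o_assoc)
    moreover have "length (dropWhile (\<lambda>j. j < p) js) = Suc (length (dropWhile (\<lambda>j. j < Suc p) js))"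
      using sorted_dropWhile_less[OF is_pos_dist_subexprD(1)[OF pds]] True by simp
    ultimately show ?thesis
      using True perm_length_subexpr_suffix[OF pds letters] by (simp add: u_def)
  next
    case False
    then show ?thesis
      using subexpr_suffix_skipped_not_descent[OF pds p] by (simp add: u_def j_def)
  qed
  also have "\<dots> \<longleftrightarrow> inv u (Suc j) < inv u j"
    using perm_length_stransp_less_iff[OF subexpr_suffix_permutes[OF pds letters] j]
    by (simp add: u_def)
  finally show ?thesis .
qed

lemma inv_subexpr_suffix_Suc:
  assumes pds: "is_pos_dist_subexpr n ws v js" and letters: "set ws \<subseteq> {1..<n}"
    and p: "p \<in> {1..length ws}"
  defines "j \<equiv> ws ! (p - 1)" and "u \<equiv> subexpr_suffix ws js p"
  shows "inv (subexpr_suffix ws js (Suc p)) = sort_step j (inv u)"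
proof (cases "p \<in> set js")
  case True
  then have "subexpr_suffix ws js (Suc p) = stransp j \<circ> u"
    using subexpr_suffix_mem[OF is_pos_dist_subexprD(1)[OF pds]]
    by (simp add: o_assoc u_def j_def)
  then have "inv (subexpr_suffix ws js (Suc p)) = inv u \<circ> stransp j"
    using inv_stransp_comp[OF permutes_bij[OF subexpr_suffix_permutes[OF pds letters]]]
    by (simp add: u_def)
  moreover have "inv u (Suc j) < inv u j"
    using True subexpr_suffix_mem_iff_descent[OF pds letters p] by (simp add: u_def j_def)
  ultimately show ?thesis
    by (simp add: sort_step_def)
next
  case False
  then have "subexpr_suffix ws js (Suc p) = u"
    unfolding u_def by (rule subexpr_suffix_Suc_not_mem[OF is_pos_dist_subexprD(1)[OF pds]])
  moreover have "\<not> inv u (Suc j) < inv u j"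
    using False subexpr_suffix_mem_iff_descent[OF pds letters p] by (simp add: u_def j_def)
  ultimately show ?thesis
    by (simp add: sort_step_def)
qed

section \<open>The reduced word of the longest element\<close>

lemma w0_word_letters: "set (w0_word n) \<subseteq> {1..<n}"
  by (auto simp: w0_word_def)

lemma w0_word_run_pos:
  assumes "1 \<le> k" "k < n" "1 \<le> t" "t \<le> n - k"
  shows "run_pos n k t \<le> length (w0_word n)" and "w0_word n ! (run_pos n k t - 1) = t"
proof -
  define run where "run = (\<lambda>k. [1..<n - k + 1])"
  have "[1..<n] = [1..<k] @ k # [Suc k..<n]"
    using assms upt_add_eq_append[of 1 k "n - k"] upt_conv_Cons[of k n] by simp
  then have w0: "w0_word n = concat (map run [1..<k]) @ run k @ concat (map run [Suc k..<n])"
    by (simp add: w0_word_def run_def)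
  have "length (concat (map run [1..<k])) = (\<Sum>l=1..<k. n - l)"
    by (simp add: run_def length_concat comp_def sum_set_upt_conv_sum_list_nat[symmetric]
        del: upt_Suc)
  then have pos: "run_pos n k t - 1 = length (concat (map run [1..<k])) + (t - 1)"
    using assms by (simp add: run_pos_def)
  have "t - 1 < length (run k)" "run k ! (t - 1) = t"
    using assms by (auto simp: run_def simp del: upt_Suc)
  then show "run_pos n k t \<le> length (w0_word n)" "w0_word n ! (run_pos n k t - 1) = t"
    using pos unfolding w0 by (auto simp: nth_append)
qed

lemma run_pos_Suc: "1 \<le> k \<Longrightarrow> run_pos n (Suc k) t = run_pos n k (n - k) + t"
  by (simp add: run_pos_def sum.atLeastLessThan_Suc)

lemma w0_word_between_runs:
  assumes "1 \<le> k" "Suc k < n" "1 \<le> i" "i < n - k"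
    and "run_pos n k (Suc i) < p" "p < run_pos n (Suc k) i"
  shows "p \<le> length (w0_word n)" and "w0_word n ! (p - 1) \<notin> {i, Suc i}"
proof -
  have "p \<le> length (w0_word n) \<and> w0_word n ! (p - 1) \<notin> {i, Suc i}"
  proof (cases "p \<le> run_pos n k (n - k)")
    case True
    define t where "t = p - run_pos n k 0"
    have "p = run_pos n k t" "Suc (Suc i) \<le> t" "t \<le> n - k"
      using True assms(5) by (auto simp: run_pos_def t_def)
    then show ?thesis
      using w0_word_run_pos[of k n t] assms(1,2) by auto
  next
    case False
    define t where "t = p - run_pos n k (n - k)"
    have "p = run_pos n (Suc k) t" "1 \<le> t" "t < i"
      using False assms(1,6) by (auto simp: run_pos_Suc t_def)
    moreover have "t \<le> n - Suc k"
      using \<open>t < i\<close> assms(4) by simp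
    ultimately show ?thesis
      using w0_word_run_pos[of "Suc k" n t] assms(1,2) by auto
  qed
  then show "p \<le> length (w0_word n)" "w0_word n ! (p - 1) \<notin> {i, Suc i}"
    by auto
qed

lemma prefix_max_w0_run:
  assumes pds: "is_pos_dist_subexpr n (w0_word n) w js"
    and "1 \<le> m" "m < n" "c \<le> n - m"
  shows "prefix_max (inv (subexpr_suffix (w0_word n) js (run_pos n m c))) c"
proof -
  define r where "r p = inv (subexpr_suffix (w0_word n) js p)" for p
  have "prefix_max (r (run_pos n m 0 + c)) c"
  proof (rule prefix_max_bubble_pass)
    fix t assume "1 \<le> t" "t < c"
    then show "r (Suc (run_pos n m 0 + t)) = sort_step t (r (run_pos n m 0 + t))"
      using inv_subexpr_suffix_Suc[OF pds w0_word_letters, of "run_pos n m t"]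
        w0_word_run_pos[of m n t] assms(2-4)
      by (simp add: r_def run_pos_def)
  qed
  then show ?thesis
    by (simp add: r_def run_pos_def)
qed

lemma prefix_max_w0_between_runs:
  assumes pds: "is_pos_dist_subexpr n (w0_word n) w js"
    and "1 \<le> m" "Suc m < n" "1 \<le> i" "i < n - m"
    and "prefix_max (inv (subexpr_suffix (w0_word n) js (Suc (run_pos n m (Suc i))))) (Suc i)"
  shows "prefix_max (inv (subexpr_suffix (w0_word n) js (run_pos n (Suc m) i))) (Suc i)"
  using assms(6)
proof (rule prefix_max_sort_steps)
  show "Suc (run_pos n m (Suc i)) \<le> run_pos n (Suc m) i"
    using assms(2-5) by (simp add: run_pos_Suc) (simp add: run_pos_def)
  fix p assume "Suc (run_pos n m (Suc i)) \<le> p" "p < run_pos n (Suc m) i"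
  then have p: "p \<in> {1..length (w0_word n)}" and avoid: "w0_word n ! (p - 1) \<notin> {i, Suc i}"
    using w0_word_between_runs[of m n i p] assms(2-5) by auto
  have "w0_word n ! (p - 1) \<in> set (w0_word n)"
    using p by (intro nth_mem) auto
  then show "inv (subexpr_suffix (w0_word n) js (Suc p))
      = sort_step (w0_word n ! (p - 1)) (inv (subexpr_suffix (w0_word n) js p))"
    and "1 \<le> w0_word n ! (p - 1) \<and> w0_word n ! (p - 1) \<noteq> Suc i
      \<and> Suc (w0_word n ! (p - 1)) \<noteq> Suc i"
    using inv_subexpr_suffix_Suc[OF pds w0_word_letters p] w0_word_letters[of n] avoid
    by auto
qed

theorem mainTheorem8:
  fixes n k i :: nat and w :: "nat \<Rightarrow> nat" and js :: "nat list"
  assumes "w permutes {1..n}"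
    and "is_pos_dist_subexpr n (w0_word n) w js"
    and "2 \<le> k" and "k \<le> n - 1"
    and "1 \<le> i" and "i \<le> n - k"
    and "run_pos n k i \<in> set js"
  shows "run_pos n (k - 1) (i + 1) \<in> set js"
proof (rule ccontr)
  assume skipped: "run_pos n (k - 1) (i + 1) \<notin> set js"
  obtain m where m: "k = Suc m" "1 \<le> m"
    using assms(3) by (cases k) auto
  define r where "r p = inv (subexpr_suffix (w0_word n) js p)" for p
  define p q where "p = run_pos n m (Suc i)" and "q = run_pos n k i"
  have "prefix_max (r p) (Suc i)"
    using prefix_max_w0_run[OF assms(2), of m "Suc i"] m assms(4,6) by (simp add: r_def p_def)
  moreover have "r (Suc p) = r p"
    using subexpr_suffix_Suc_not_mem[OF is_pos_dist_subexprD(1)[OF assms(2)]] skipped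
    by (simp add: r_def p_def m)
  ultimately have "prefix_max (r q) (Suc i)"
    using prefix_max_w0_between_runs[OF assms(2), of m i] m assms(4-6)
    by (simp add: r_def p_def q_def)
  have "q \<in> {1..length (w0_word n)}" "w0_word n ! (q - 1) = i"
    using w0_word_run_pos[of k n i] assms(3-6) by (auto simp: q_def run_pos_def)
  then have "r q (Suc i) < r q i"
    using subexpr_suffix_mem_iff_descent[OF assms(2) w0_word_letters] assms(7)
    by (simp add: r_def q_def)
  with \<open>prefix_max (r q) (Suc i)\<close> show False
    using assms(5) by (auto simp: prefix_max_def)
qed

end
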